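(* Let $f:\mathbb{R}^n\to\mathbb{R}$ be Lipschitz with constant $L$ and bounded below, and let the functions $\Phi_s$ defined below be bounded below (uniformly in $s$) and attain their infima. Let the sequence $\{x_k\}$ be generated by the following algorithm, starting from some $x_1\in\mathbb{R}^n$ and a sequence $\varepsilon_k\to+0$. At step $k$, with current index $s=s(k)$ and $\tilde\Phi_{s,k}(y)=\Phi_s(y)+L_s\|y-x_k\|^2$: (1) compute $\Delta_k=-(\nabla^2\tilde\Phi_{s,k}(x_k))^{-1}\nabla\tilde\Phi_{s,k}(x_k)$; (2) find a nonnegative integer $l_k$ with $\tilde\Phi_{s,k}(x_k+2^{-l_k}\Delta_k)\le\tilde\Phi_{s,k}(x_k)-2^{-2l_k}\frac{L_s}{2}\|\Delta_k\|^2$; (3) set $x_{k+1}=x_k+2^{-l_k}\Delta_k$; (4) as $k$ increases, change $s$ (decreasing $d(D_s)$) so that $\frac{3\|\Delta_k\|}{d(D_s)}<\varepsilon_k$ holds, and repeat. Then every limit point $x^*$ of $\{x_k\}$ is a stationary point of $f$, i.e. $0\in\partial_{CL}f(x^* )$.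
   Context: $\mu$ is Lebesgue measure; integrals are Lebesgue integrals. $D_s=\{v\in\mathbb{R}^n:\|v\|\le r_s\}$ with $r_s\to+0$ as $s\to\infty$, and $d(D_s)$ is its diameter. $\varphi_s(x)=\frac{1}{\mu(D_s)}\int_{D_s}f(x+y)\,dy$ and $\Phi_s(x)=\frac{1}{\mu(D_s)}\int_{D_s}\varphi_s(x+y)\,dy$; $\Phi_s$ is twice continuously differentiable, and $L_s=L/d(D_s)$ is a bound $\|\nabla^2\Phi_s(\cdot)\|\le L_s$ on its Hessian, so that $L_s\|z\|^2\le(\nabla^2\tilde\Phi_{s,k}(x_k)z,z)\le 3L_s\|z\|^2$ for all $z$. $\partial_{CL}f$ denotes the Clarke subdifferential. *)

theory Defs
  imports "HOL-Analysis.Analysis"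
begin

definition ball_avg :: "real \<Rightarrow> (real^'n \<Rightarrow> real) \<Rightarrow> real^'n \<Rightarrow> real" where
  "ball_avg rho g x =
     (LINT y : cball 0 rho | lborel. g (x + y)) / measure lborel (cball (0::real^'n) rho)"

definition clarke_dd :: "(real^'n \<Rightarrow> real) \<Rightarrow> real^'n \<Rightarrow> real^'n \<Rightarrow> ereal" where
  "clarke_dd f x v =
     Limsup (at (x, 0) within (UNIV \<times> {0<..}))
            (\<lambda>(y, t). ereal ((f (y + t *\<^sub>R v) - f y) / t))"

definition clarke_subdiff :: "(real^'n \<Rightarrow> real) \<Rightarrow> real^'n \<Rightarrow> (real^'n) set" where
  "clarke_subdiff f x = {\<xi>. \<forall>v. ereal (\<xi> \<bullet> v) \<le> clarke_dd f x v}"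

end

theory Submission imports Defs begin

text \<open>Suppose some direction \<open>v\<close> had negative Clarke derivative at the limit point
  \<open>x\<^sup>*\<close>. Then \<open>f\<close> decreases at a uniform rate \<open>c < 0\<close> along \<open>v\<close> on a
  neighbourhood of \<open>x\<^sup>*\<close>, averaging over small balls preserves this, and so
  \<open>\<nabla>\<Phi>\<^sub>s(y) \<bullet> v \<le> c\<close> for all \<open>y\<close> near \<open>x\<^sup>*\<close> once \<open>r\<^sub>s\<close> is small. On the other hand
  the Newton equation \<open>(\<nabla>\<^sup>2\<Phi>\<^sub>s + 2L\<^sub>s I) \<Delta>\<^sub>k = -\<nabla>\<Phi>\<^sub>s(x\<^sub>k)\<close> together with
  \<open>\<parallel>\<nabla>\<^sup>2\<Phi>\<^sub>s\<parallel> \<le> L\<^sub>s\<close> gives \<open>\<parallel>\<nabla>\<Phi>\<^sub>s(x\<^sub>k)\<parallel> \<le> 3L\<^sub>s\<parallel>\<Delta>\<^sub>k\<parallel> < L \<epsilon>\<^sub>k \<rightarrow> 0\<close>,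
  which is incompatible with the first bound along the subsequence converging to \<open>x\<^sup>*\<close>.\<close>

definition uniform_descent ::
    "('a::real_normed_vector \<Rightarrow> real) \<Rightarrow> 'a \<Rightarrow> real \<Rightarrow> 'a \<Rightarrow> real \<Rightarrow> real \<Rightarrow> bool" where
  "uniform_descent g v c x \<delta> \<tau> \<longleftrightarrow>
     (\<forall>y \<in> ball x \<delta>. \<forall>t \<in> {0<..<\<tau>}. g (y + t *\<^sub>R v) - g y \<le> c * t)"

lemma clarke_dd_less_imp_uniform_descent:
  fixes f :: "real^'n \<Rightarrow> real"
  assumes "clarke_dd f x v < ereal c"
  obtains \<delta> where "0 < \<delta>" "uniform_descent f v c x \<delta> \<delta>"
proof -
  have "eventually (\<lambda>p. (case p of (y, t) \<Rightarrow> ereal ((f (y + t *\<^sub>R v) - f y) / t)) < ereal c)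
          (at (x, 0) within (UNIV \<times> {0<..}))"
    using assms unfolding clarke_dd_def by (rule Limsup_lessD)
  then obtain d where "0 < d" and d: "\<And>y t. 0 < t \<Longrightarrow> dist (y, t) (x, 0) < d \<Longrightarrow>
      (f (y + t *\<^sub>R v) - f y) / t < c"
    unfolding eventually_at by auto
  have "uniform_descent f v c x (d/2) (d/2)"
    unfolding uniform_descent_def
  proof (intro ballI)
    fix y t assume "y \<in> ball x (d/2)" "t \<in> {0<..<d/2}"
    then have "dist (y, t) (x, 0) < d"
      using dist_triangle[of "(y, t)" "(x, 0)" "(x, t)"] by (auto simp: dist_Pair_Pair dist_commute)
    with \<open>t \<in> {0<..<d/2}\<close> show "f (y + t *\<^sub>R v) - f y \<le> c * t"
      using d[of t y] by (simp add: divide_less_eq)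
  qed
  with \<open>0 < d\<close> show thesis by (intro that[of "d/2"]) auto
qed

lemma set_integrable_cball_translate:
  fixes g :: "'a::euclidean_space \<Rightarrow> real"
  assumes "continuous_on UNIV g"
  shows "set_integrable lborel (cball 0 \<rho>) (\<lambda>y. g (a + y))"
  unfolding set_integrable_def
  by (rule borel_integrable_compact) (auto intro!: continuous_intros continuous_on_compose2[OF assms])

lemma ball_avg_diff_le:
  fixes g :: "real^'n \<Rightarrow> real"
  assumes "continuous_on UNIV g" "0 < \<rho>"
    and "\<And>y. y \<in> cball 0 \<rho> \<Longrightarrow> g (a + y) - g (b + y) \<le> C"
  shows "ball_avg \<rho> g a - ball_avg \<rho> g b \<le> C"
proof -
  define \<mu> where "\<mu> = measure lborel (cball (0::real^'n) \<rho>)"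
  have "\<mu> > 0" unfolding \<mu>_def using content_cball_pos[OF assms(2)] by simp
  have "(LINT y : cball 0 \<rho> | lborel. g (a + y)) - (LINT y : cball 0 \<rho> | lborel. g (b + y))
       = (LINT y : cball 0 \<rho> | lborel. g (a + y) - g (b + y))"
    by (rule set_integral_diff(2)[symmetric]) (auto intro: set_integrable_cball_translate assms)
  also have "\<dots> \<le> (LINT (y::real^'n) : cball 0 \<rho> | lborel. C)"
  proof (rule set_integral_mono)
    show "set_integrable lborel (cball 0 \<rho>) (\<lambda>y. g (a + y) - g (b + y))"
      by (intro set_integral_diff(1) set_integrable_cball_translate assms(1))
    show "set_integrable lborel (cball 0 \<rho>) (\<lambda>_::real^'n. C)"
      unfolding set_integrable_def by (rule borel_integrable_compact) auto
  qed (use assms(3) in auto)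
  also have "\<dots> = \<mu> * C"
    unfolding \<mu>_def using emeasure_lborel_cball_finite[of "0::real^'n" \<rho>]
    by (subst set_integral_const) auto
  finally show ?thesis
    unfolding ball_avg_def \<mu>_def[symmetric] using \<open>\<mu> > 0\<close>
    by (simp add: diff_divide_distrib[symmetric] divide_le_eq mult.commute)
qed

lemma lipschitz_on_ball_avg:
  fixes g :: "real^'n \<Rightarrow> real"
  assumes "L-lipschitz_on UNIV g" "0 < \<rho>"
  shows "L-lipschitz_on UNIV (ball_avg \<rho> g)"
proof (rule lipschitz_onI)
  show "0 \<le> L" using assms(1) by (rule lipschitz_on_nonneg)
  have g_cont: "continuous_on UNIV g" using assms(1) by (rule lipschitz_on_continuous_on)
  have one_side: "ball_avg \<rho> g a - ball_avg \<rho> g b \<le> L * dist a b" for a b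
  proof (rule ball_avg_diff_le[OF g_cont assms(2)])
    fix y :: "real^'n"
    have "dist (g (a + y)) (g (b + y)) \<le> L * dist (a + y) (b + y)"
      using assms(1) by (rule lipschitz_onD) auto
    then show "g (a + y) - g (b + y) \<le> L * dist a b"
      by (simp add: dist_real_def dist_norm)
  qed
  fix a b :: "real^'n"
  show "dist (ball_avg \<rho> g a) (ball_avg \<rho> g b) \<le> L * dist a b"
    using one_side[of a b] one_side[of b a] by (simp add: dist_real_def dist_commute)
qed

lemma uniform_descent_ball_avg:
  fixes g :: "real^'n \<Rightarrow> real"
  assumes "continuous_on UNIV g" "0 < \<rho>" "uniform_descent g v c x \<delta> \<tau>"
  shows "uniform_descent (ball_avg \<rho> g) v c x (\<delta> - \<rho>) \<tau>"
  unfolding uniform_descent_def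
proof (intro ballI)
  fix w t assume w: "w \<in> ball x (\<delta> - \<rho>)" and t: "t \<in> {0<..<\<tau>}"
  show "ball_avg \<rho> g (w + t *\<^sub>R v) - ball_avg \<rho> g w \<le> c * t"
  proof (rule ball_avg_diff_le[OF assms(1,2)])
    fix y :: "real^'n" assume "y \<in> cball 0 \<rho>"
    then have "w + y \<in> ball x \<delta>"
      using w norm_triangle_ineq[of "w - x" y] by (simp add: dist_norm norm_minus_commute algebra_simps)
    then have "g ((w + y) + t *\<^sub>R v) - g (w + y) \<le> c * t"
      using assms(3) t unfolding uniform_descent_def by blast
    then show "g (w + t *\<^sub>R v + y) - g (w + y) \<le> c * t"
      by (simp add: algebra_simps)
  qed
qed

lemma uniform_descent_imp_derivative_le:
  fixes \<phi> :: "'a::real_normed_vector \<Rightarrow> real"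
  assumes "uniform_descent \<phi> v c x \<delta> \<tau>" "0 < \<tau>" "z \<in> ball x \<delta>"
    and "(\<phi> has_derivative D) (at z)"
  shows "D v \<le> c"
proof -
  have "((\<lambda>t. \<phi> (z + t *\<^sub>R v)) has_derivative (\<lambda>t. D (t *\<^sub>R v))) (at 0)"
    using assms(4) by (auto intro!: derivative_eq_intros has_derivative_compose[of _ _ 0 UNIV \<phi>])
  moreover have "(\<lambda>t. D (t *\<^sub>R v)) = (*) (D v)"
    using has_derivative_bounded_linear[OF assms(4)] by (simp add: linear_simps fun_eq_iff)
  ultimately have "((\<lambda>t. \<phi> (z + t *\<^sub>R v)) has_field_derivative D v) (at 0)"
    by (simp add: has_field_derivative_def)
  then have "((\<lambda>t. (\<phi> (z + t *\<^sub>R v) - \<phi> z) / t) \<longlongrightarrow> D v) (at_right 0)"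
    by (auto simp: has_field_derivative_iff intro: tendsto_mono[OF at_le])
  moreover have "eventually (\<lambda>t. (\<phi> (z + t *\<^sub>R v) - \<phi> z) / t \<le> c) (at_right 0)"
    unfolding eventually_at_right_field using assms(1-3)
    by (intro exI[of _ \<tau>]) (auto simp: uniform_descent_def pos_divide_le_eq)
  ultimately show ?thesis by (rule tendsto_upperbound) simp
qed

lemma lipschitz_constant_pos_if_uniform_descent:
  assumes "L-lipschitz_on UNIV g" "uniform_descent g v c x \<delta> \<tau>" "0 < \<delta>" "0 < \<tau>" "c < 0"
  shows "0 < L"
proof -
  have "0 \<le> L" using assms(1) by (rule lipschitz_on_nonneg)
  have "x \<in> ball x \<delta>" "\<tau>/2 \<in> {0<..<\<tau>}" using assms(3,4) by auto
  then have "g (x + (\<tau>/2) *\<^sub>R v) - g x \<le> c * (\<tau>/2)"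
    using assms(2) unfolding uniform_descent_def by blast
  moreover have "dist (g (x + (\<tau>/2) *\<^sub>R v)) (g x) \<le> L * dist (x + (\<tau>/2) *\<^sub>R v) x"
    using assms(1) by (rule lipschitz_onD) auto
  ultimately have "L \<noteq> 0"
    using assms(4,5) mult_neg_pos[of c "\<tau>/2"] by (auto simp: dist_real_def)
  with \<open>0 \<le> L\<close> show ?thesis by simp
qed

lemma matrix_vector_mult_add_scaled_identity:
  fixes H :: "real^'n^'n"
  shows "(H + \<gamma> *\<^sub>R mat 1) *v u = H *v u + \<gamma> *\<^sub>R u"
  by (simp add: matrix_vector_mult_add_rdistrib scaleR_matrix_vector_assoc[symmetric])

lemma invertible_add_scaled_identity:
  fixes H :: "real^'n^'n"
  assumes "\<And>u. norm (H *v u) \<le> \<beta> * norm u" "\<beta> < \<gamma>"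
  shows "invertible (H + \<gamma> *\<^sub>R mat 1)"
proof -
  have "u = 0" if "(H + \<gamma> *\<^sub>R mat 1) *v u = 0" for u
  proof -
    have "H *v u = - (\<gamma> *\<^sub>R u)"
      using that by (simp add: matrix_vector_mult_add_scaled_identity eq_neg_iff_add_eq_0)
    then have "\<bar>\<gamma>\<bar> * norm u \<le> \<beta> * norm u" using assms(1)[of u] by simp
    moreover have "\<gamma> * norm u \<le> \<bar>\<gamma>\<bar> * norm u" by (simp add: mult_right_mono)
    ultimately have "(\<gamma> - \<beta>) * norm u \<le> 0" by (simp add: algebra_simps)
    with assms(2) have "norm u \<le> 0" by (simp add: mult_le_0_iff)
    then show ?thesis by simp
  qed
  then show ?thesis
    by (simp add: invertible_left_inverse matrix_left_invertible_ker)
qed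

lemma matrix_mul_matrix_inv:
  fixes A :: "'a::field^'n^'n"
  assumes "invertible A"
  shows "A ** matrix_inv A = mat 1"
  using someI_ex[OF assms[unfolded invertible_def]] unfolding matrix_inv_def by blast

lemma norm_le_regularized_newton_step:
  fixes H :: "real^'n^'n"
  assumes "0 < \<beta>" "onorm ((*v) H) \<le> \<beta>"
  shows "norm g \<le> 3 * \<beta> * norm (matrix_inv (H + (2 * \<beta>) *\<^sub>R mat 1) *v g)"
proof -
  have H_bound: "norm (H *v u) \<le> \<beta> * norm u" for u
    using onorm[of "(*v) H" u] assms(2) mult_right_mono[of _ \<beta> "norm u"]
    by (simp add: order_trans)
  define A where "A = H + (2 * \<beta>) *\<^sub>R mat 1"
  define \<Delta> where "\<Delta> = matrix_inv A *v g"
  have "A ** matrix_inv A = mat 1"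
    unfolding A_def using assms H_bound
    by (intro matrix_mul_matrix_inv invertible_add_scaled_identity) auto
  then have "g = A *v \<Delta>"
    unfolding \<Delta>_def by (simp add: matrix_vector_mul_assoc)
  also have "\<dots> = H *v \<Delta> + (2 * \<beta>) *\<^sub>R \<Delta>"
    unfolding A_def by (rule matrix_vector_mult_add_scaled_identity)
  finally have "norm g \<le> norm (H *v \<Delta>) + norm ((2 * \<beta>) *\<^sub>R \<Delta>)"
    by (metis norm_triangle_ineq)
  also have "\<dots> \<le> 3 * \<beta> * norm \<Delta>" using assms(1) H_bound[of \<Delta>] by simp
  finally show ?thesis unfolding \<Delta>_def A_def .
qed

lemma derivative_ball_avg_ball_avg_le:
  fixes f :: "real^'n \<Rightarrow> real"
  assumes "L-lipschitz_on UNIV f" "0 < \<rho>" "uniform_descent f v c x \<delta> \<tau>" "0 < \<tau>"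
    and "z \<in> ball x (\<delta> - 2 * \<rho>)" "(ball_avg \<rho> (ball_avg \<rho> f) has_derivative D) (at z)"
  shows "D v \<le> c"
proof -
  have "uniform_descent (ball_avg \<rho> f) v c x (\<delta> - \<rho>) \<tau>"
    using assms(1-3) by (intro uniform_descent_ball_avg lipschitz_on_continuous_on)
  from uniform_descent_ball_avg[OF _ assms(2) this]
  have "uniform_descent (ball_avg \<rho> (ball_avg \<rho> f)) v c x (\<delta> - 2 * \<rho>) \<tau>"
    using lipschitz_on_continuous_on[OF lipschitz_on_ball_avg[OF assms(1,2)]]
    by (simp add: algebra_simps)
  then show ?thesis using assms(4-6) by (rule uniform_descent_imp_derivative_le)
qed

lemma eventually_in_shrinking_ball:
  fixes X :: "nat \<Rightarrow> 'a::metric_space"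
  assumes "X \<longlonglongrightarrow> a" "\<rho> \<longlonglongrightarrow> 0" "0 < \<delta>"
  shows "eventually (\<lambda>j. X j \<in> ball a (\<delta> - \<rho> j)) sequentially"
proof -
  have "(\<lambda>j. \<delta> - \<rho> j - dist a (X j)) \<longlonglongrightarrow> \<delta> - 0 - dist a a"
    using assms(1,2) by (intro tendsto_intros)
  then have "eventually (\<lambda>j. 0 < \<delta> - \<rho> j - dist a (X j)) sequentially"
    using assms(3) by (intro order_tendstoD(1)) simp_all
  then show ?thesis by eventually_elim simp
qed

theorem theorem3:
  fixes f :: "real^'n \<Rightarrow> real" and L :: real and r :: "nat \<Rightarrow> real"
    and Phi :: "nat \<Rightarrow> real^'n \<Rightarrow> real"
    and grad :: "nat \<Rightarrow> real^'n \<Rightarrow> real^'n"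
    and hess :: "nat \<Rightarrow> real^'n \<Rightarrow> real^'n^'n"
    and Ls :: "nat \<Rightarrow> real"
    and eps :: "nat \<Rightarrow> real" and s :: "nat \<Rightarrow> nat" and l :: "nat \<Rightarrow> nat"
    and x :: "nat \<Rightarrow> real^'n" and Delta :: "nat \<Rightarrow> real^'n"
    and Phit :: "nat \<Rightarrow> real^'n \<Rightarrow> real"
    and \<sigma> :: "nat \<Rightarrow> nat" and xstar :: "real^'n"
  assumes f_lip: "L-lipschitz_on UNIV f"
    and f_bdd: "\<exists>c. \<forall>y. c \<le> f y"
    and r_pos: "\<forall>s. 0 < r s" and r_lim: "r \<longlonglongrightarrow> 0"
    and Phi_def: "Phi = (\<lambda>s. ball_avg (r s) (ball_avg (r s) f))"
    and Phi_grad: "\<forall>s y. (Phi s has_derivative (\<lambda>h. grad s y \<bullet> h)) (at y)"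
    and Phi_hess: "\<forall>s y. (grad s has_derivative (\<lambda>h. hess s y *v h)) (at y)"
    and hess_cont: "\<forall>s. continuous_on UNIV (hess s)"
    and Ls_def: "Ls = (\<lambda>s. L / diameter (cball (0::real^'n) (r s)))"
    and hess_bound: "\<forall>s y. onorm (\<lambda>h. hess s y *v h) \<le> Ls s"
    and Phi_bdd: "\<exists>c. \<forall>s y. c \<le> Phi s y"
    and Phi_min: "\<forall>s. \<exists>y. \<forall>z. Phi s y \<le> Phi s z"
    and eps_pos: "\<forall>k. 0 < eps k" and eps_lim: "eps \<longlonglongrightarrow> 0"
    and Phit_def: "Phit = (\<lambda>k y. Phi (s k) y + Ls (s k) * (norm (y - x k))\<^sup>2)"
    and Delta_def: "Delta = (\<lambda>k. - (matrix_inv (hess (s k) (x k) + (2 * Ls (s k)) *\<^sub>R mat 1)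
                                       *v grad (s k) (x k)))"
    and step_ls: "\<forall>k. Phit k (x k + (1/2) ^ l k *\<^sub>R Delta k)
                      \<le> Phit k (x k) - (1/2) ^ (2 * l k) * (Ls (s k) / 2) * (norm (Delta k))\<^sup>2"
    and step_x: "\<forall>k. x (Suc k) = x k + (1/2) ^ l k *\<^sub>R Delta k"
    and s_mono: "mono s" and s_lim: "filterlim s at_top sequentially"
    and s_cond: "\<forall>k. 3 * norm (Delta k) / diameter (cball (0::real^'n) (r (s k))) < eps k"
    and limpt: "strict_mono \<sigma>" "(x \<circ> \<sigma>) \<longlonglongrightarrow> xstar"
  shows "0 \<in> clarke_subdiff f xstar"
  (* Of the algorithm only the Newton equation for Delta and the choice of s enter. *)
  unfolding clarke_subdiff_def
proof (intro CollectI allI)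
  fix v :: "real^'n"
  show "ereal (0 \<bullet> v) \<le> clarke_dd f xstar v"
  proof (rule ccontr)
    assume "\<not> ?thesis"
    then obtain c where dd_less: "clarke_dd f xstar v < ereal c" and "c < 0"
      by (metis ereal_dense2 inner_zero_left less_ereal.simps(1) linorder_not_le)
    from dd_less obtain \<delta> where "0 < \<delta>" and descent: "uniform_descent f v c xstar \<delta> \<delta>"
      by (rule clarke_dd_less_imp_uniform_descent)
    have "0 < L"
      using lipschitz_constant_pos_if_uniform_descent[OF f_lip descent] \<open>0 < \<delta>\<close> \<open>c < 0\<close> by blast
    have r: "0 < r S" for S using r_pos by blast
    have grad_dir: "grad S z \<bullet> v \<le> c" if "z \<in> ball xstar (\<delta> - 2 * r S)" for S z
      using derivative_ball_avg_ball_avg_le[OF f_lip r descent \<open>0 < \<delta>\<close> that] Phi_grad Phi_def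
      by simp
    have grad_small: "norm (grad (s k) (x k)) \<le> L * eps k" for k
    proof -
      have "0 < Ls (s k)" using r[of "s k"] \<open>0 < L\<close> by (simp add: Ls_def diameter_cball)
      then have "norm (grad (s k) (x k)) \<le> 3 * Ls (s k) * norm (Delta k)"
        using norm_le_regularized_newton_step[OF _ hess_bound[rule_format]] by (simp add: Delta_def)
      also have "\<dots> = L * (3 * norm (Delta k) / diameter (cball (0::real^'n) (r (s k))))"
        using r[of "s k"] by (simp add: Ls_def diameter_cball)
      also have "\<dots> \<le> L * eps k"
        using s_cond[rule_format, of k] \<open>0 < L\<close> by (intro mult_left_mono) auto
      finally show ?thesis .
    qed
    have "eventually (\<lambda>j. x (\<sigma> j) \<in> ball xstar (\<delta> - 2 * r (s (\<sigma> j)))) sequentially"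
    proof (rule eventually_in_shrinking_ball[OF _ _ \<open>0 < \<delta>\<close>])
      show "(\<lambda>j. x (\<sigma> j)) \<longlonglongrightarrow> xstar" using limpt(2) by (simp add: o_def)
      have "(\<lambda>j. r (s (\<sigma> j))) \<longlonglongrightarrow> 0"
        using filterlim_compose[OF r_lim filterlim_compose[OF s_lim filterlim_subseq[OF limpt(1)]]] .
      then show "(\<lambda>j. 2 * r (s (\<sigma> j))) \<longlonglongrightarrow> 0" by (simp add: tendsto_mult_right_zero)
    qed
    moreover have "(\<lambda>j. L * eps (\<sigma> j) * norm v) \<longlonglongrightarrow> L * 0 * norm v"
      using LIMSEQ_subseq_LIMSEQ[OF eps_lim limpt(1)] by (intro tendsto_intros) (simp add: o_def)
    from order_tendstoD(2)[OF this, of "- c"]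
    have "eventually (\<lambda>j. L * eps (\<sigma> j) * norm v < - c) sequentially"
      using \<open>c < 0\<close> by simp
    ultimately obtain j where "x (\<sigma> j) \<in> ball xstar (\<delta> - 2 * r (s (\<sigma> j)))"
      and "L * eps (\<sigma> j) * norm v < - c"
      using eventually_happens'[OF trivial_limit_sequentially eventually_conj] by blast
    have "\<bar>grad (s (\<sigma> j)) (x (\<sigma> j)) \<bullet> v\<bar> \<le> norm (grad (s (\<sigma> j)) (x (\<sigma> j))) * norm v"
      by (rule Cauchy_Schwarz_ineq2)
    also have "\<dots> \<le> L * eps (\<sigma> j) * norm v" by (rule mult_right_mono[OF grad_small norm_ge_zero])
    also have "\<dots> < - c" by fact
    finally     show False using grad_dir[OF \<open>x (\<sigma> j) \<in> _\<close>] by linarith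
  qed
qed

end
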